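(* In the $(3,2,2)$ scenario, the correlation $p(\vec x|\vec a)=\tfrac12\delta_{\vec x,(a_3,a_1,a_2)}+\tfrac12\delta_{\vec x,(\bar a_3,\bar a_1,\bar a_2)}$ (which has $p_{\rm gynin}=1$) is probabilistically consistent — it is realized by the Baumeler–Feix–Wolf classical process $p(\vec i|\vec o)=\tfrac12\delta_{\vec i,(o_3,o_1,o_2)}+\tfrac12\delta_{\vec i,(\bar o_3,\bar o_1,\bar o_2)}$ (with $I_k=O_k=\{0,1\}$) under the local interventions $p(x_k,o_k|a_k,i_k)=\delta_{x_k,i_k}\delta_{o_k,a_k}$ — but is not deterministically consistent. Consequently the set $\mathcal{DC}$ of deterministically consistent correlations is strictly contained in the set $\mathcal{PC}$ of probabilistically consistent correlations.
   Context: $(3,2,2)$ scenario: three parties, $a_k,x_k\in\{0,1\}$, $\bar a=1\oplus a$. $p_{\rm gynin}=\frac18\sum_{\vec a}\big[p((a_3,a_1,a_2)|\vec a)+p((\bar a_3,\bar a_1,\bar a_2)|\vec a)\big]$. For finite sets $I_k,O_k$, a conditional distribution $p(\vec i|\vec o)$ is a classical process if for all finite setting/outcome sets and all local interventions $p(x_k,o_k|a_k,i_k)$, the expression $\sum_{\vec i,\vec o}\prod_kp(x_k,o_k|a_k,i_k)p(\vec i|\vec o)$ is a valid conditional distribution over $\vec x$ for every $\vec a$. A process function is $\omega:\vec O\to\vec I$ with $\delta_{\vec i,\omega(\vec o)}$ a classical process. A correlation is probabilistically consistent ($\in\mathcal{PC}$) if it equals $\sum_{\vec i,\vec o}\prod_kp(x_k,o_k|a_k,i_k)p(\vec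 i|\vec o)$ for some finite $I_k,O_k$, local interventions, and a classical process $p(\vec i|\vec o)$; it is deterministically consistent ($\in\mathcal{DC}$) if moreover $p(\vec i|\vec o)$ can be taken to be a convex combination of process functions $\delta_{\vec i,\omega(\vec o)}$. *)

theory Defs
  imports Complex_Main
begin

type_synonym vec3 = "nat \<times> nat \<times> nat"

definition cond_dist :: "('b \<Rightarrow> 'a \<Rightarrow> real) \<Rightarrow> 'b set \<Rightarrow> 'a set \<Rightarrow> bool" where
  "cond_dist p Y Z \<longleftrightarrow> (\<forall>z\<in>Z. (\<forall>y\<in>Y. 0 \<le> p y z) \<and> (\<Sum>y\<in>Y. p y z) = 1)"

text \<open>A local intervention q x o a i = p(x,o|a,i) with settings A, outcomes X,
inputs I and outputs O.\<close>
definition local_intervention ::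
  "(nat \<Rightarrow> nat \<Rightarrow> nat \<Rightarrow> nat \<Rightarrow> real) \<Rightarrow> nat set \<Rightarrow> nat set \<Rightarrow> nat set \<Rightarrow> nat set \<Rightarrow> bool" where
  "local_intervention q A X I Outs \<longleftrightarrow>
     cond_dist (\<lambda>(x, u) (a, i). q x u a i) (X \<times> Outs) (A \<times> I)"

definition induced ::
  "(nat \<Rightarrow> nat \<Rightarrow> nat \<Rightarrow> nat \<Rightarrow> real) \<Rightarrow> (nat \<Rightarrow> nat \<Rightarrow> nat \<Rightarrow> nat \<Rightarrow> real) \<Rightarrow>
   (nat \<Rightarrow> nat \<Rightarrow> nat \<Rightarrow> nat \<Rightarrow> real) \<Rightarrow> (vec3 \<Rightarrow> vec3 \<Rightarrow> real) \<Rightarrow>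
   nat set \<Rightarrow> nat set \<Rightarrow> nat set \<Rightarrow> nat set \<Rightarrow> nat set \<Rightarrow> nat set \<Rightarrow>
   vec3 \<Rightarrow> vec3 \<Rightarrow> real" where
  "induced q1 q2 q3 p I1 I2 I3 O1 O2 O3 =
     (\<lambda>(x1, x2, x3) (a1, a2, a3).
        \<Sum>(i1, i2, i3)\<in>I1 \<times> I2 \<times> I3. \<Sum>(o1, o2, o3)\<in>O1 \<times> O2 \<times> O3.
          q1 x1 o1 a1 i1 * q2 x2 o2 a2 i2 * q3 x3 o3 a3 i3 * p (i1, i2, i3) (o1, o2, o3))"

definition classical_process ::
  "(vec3 \<Rightarrow> vec3 \<Rightarrow> real) \<Rightarrow> nat set \<Rightarrow> nat set \<Rightarrow> nat set \<Rightarrow> nat set \<Rightarrow> nat set \<Rightarrow> nat set \<Rightarrow> bool" where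
  "classical_process p I1 I2 I3 O1 O2 O3 \<longleftrightarrow>
     cond_dist p (I1 \<times> I2 \<times> I3) (O1 \<times> O2 \<times> O3) \<and>
     (\<forall>A1 A2 A3 X1 X2 X3 :: nat set. \<forall>q1 q2 q3.
        finite A1 \<and> finite A2 \<and> finite A3 \<and> finite X1 \<and> finite X2 \<and> finite X3 \<and>
        local_intervention q1 A1 X1 I1 O1 \<and> local_intervention q2 A2 X2 I2 O2 \<and>
        local_intervention q3 A3 X3 I3 O3 \<longrightarrow>
        cond_dist (induced q1 q2 q3 p I1 I2 I3 O1 O2 O3) (X1 \<times> X2 \<times> X3) (A1 \<times> A2 \<times> A3))"

definition delta_proc :: "(vec3 \<Rightarrow> vec3) \<Rightarrow> vec3 \<Rightarrow> vec3 \<Rightarrow> real" where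
  "delta_proc \<omega> = (\<lambda>i u. if i = \<omega> u then 1 else 0)"

definition process_function ::
  "(vec3 \<Rightarrow> vec3) \<Rightarrow> nat set \<Rightarrow> nat set \<Rightarrow> nat set \<Rightarrow> nat set \<Rightarrow> nat set \<Rightarrow> nat set \<Rightarrow> bool" where
  "process_function \<omega> I1 I2 I3 O1 O2 O3 \<longleftrightarrow>
     (\<forall>u\<in>O1 \<times> O2 \<times> O3. \<omega> u \<in> I1 \<times> I2 \<times> I3) \<and>
     classical_process (delta_proc \<omega>) I1 I2 I3 O1 O2 O3"

definition binset :: "nat set" where "binset = {0, 1}"

definition bitvec :: "vec3 set" where "bitvec = binset \<times> binset \<times> binset"

definition bar :: "nat \<Rightarrow> nat" where "bar a = 1 - a"

type_synonym correlation = "vec3 \<Rightarrow> vec3 \<Rightarrow> real"  (* P x a = p(x|a) *)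

definition realizes ::
  "correlation \<Rightarrow> (vec3 \<Rightarrow> vec3 \<Rightarrow> real) \<Rightarrow> nat set \<Rightarrow> nat set \<Rightarrow> nat set \<Rightarrow> nat set \<Rightarrow> nat set \<Rightarrow> nat set \<Rightarrow>
   (nat \<Rightarrow> nat \<Rightarrow> nat \<Rightarrow> nat \<Rightarrow> real) \<Rightarrow> (nat \<Rightarrow> nat \<Rightarrow> nat \<Rightarrow> nat \<Rightarrow> real) \<Rightarrow>
   (nat \<Rightarrow> nat \<Rightarrow> nat \<Rightarrow> nat \<Rightarrow> real) \<Rightarrow> bool" where
  "realizes P p I1 I2 I3 O1 O2 O3 q1 q2 q3 \<longleftrightarrow>
     finite I1 \<and> finite I2 \<and> finite I3 \<and> finite O1 \<and> finite O2 \<and> finite O3 \<and>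
     I1 \<noteq> {} \<and> I2 \<noteq> {} \<and> I3 \<noteq> {} \<and> O1 \<noteq> {} \<and> O2 \<noteq> {} \<and> O3 \<noteq> {} \<and>
     classical_process p I1 I2 I3 O1 O2 O3 \<and>
     local_intervention q1 binset binset I1 O1 \<and> local_intervention q2 binset binset I2 O2 \<and>
     local_intervention q3 binset binset I3 O3 \<and>
     (\<forall>x\<in>bitvec. \<forall>a\<in>bitvec. P x a = induced q1 q2 q3 p I1 I2 I3 O1 O2 O3 x a)"

definition PC :: "correlation set" where
  "PC = {P. \<exists>p I1 I2 I3 O1 O2 O3 q1 q2 q3. realizes P p I1 I2 I3 O1 O2 O3 q1 q2 q3}"

definition DC :: "correlation set" where
  "DC = {P. \<exists>p I1 I2 I3 O1 O2 O3 q1 q2 q3. realizes P p I1 I2 I3 O1 O2 O3 q1 q2 q3 \<and>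
           (\<exists>(J :: nat set) (lam :: nat \<Rightarrow> real) (\<omega> :: nat \<Rightarrow> vec3 \<Rightarrow> vec3).
              finite J \<and> (\<forall>j\<in>J. 0 \<le> lam j \<and> process_function (\<omega> j) I1 I2 I3 O1 O2 O3) \<and>
              (\<Sum>j\<in>J. lam j) = 1 \<and>
              (\<forall>i\<in>I1 \<times> I2 \<times> I3. \<forall>u\<in>O1 \<times> O2 \<times> O3.
                  p i u = (\<Sum>j\<in>J. lam j * delta_proc (\<omega> j) i u)))}"

definition p_gynin :: "correlation \<Rightarrow> real" where
  "p_gynin P = (1/8) * (\<Sum>(a1, a2, a3)\<in>bitvec.
       P (a3, a1, a2) (a1, a2, a3) + P (bar a3, bar a1, bar a2) (a1, a2, a3))"

definition gynin_corr :: correlation where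
  "gynin_corr = (\<lambda>x (a1, a2, a3).
     (1/2) * (if x = (a3, a1, a2) then 1 else 0) +
     (1/2) * (if x = (bar a3, bar a1, bar a2) then 1 else 0))"

definition BFW :: "vec3 \<Rightarrow> vec3 \<Rightarrow> real" where
  "BFW = (\<lambda>i (o1, o2, o3).
     (1/2) * (if i = (o3, o1, o2) then 1 else 0) +
     (1/2) * (if i = (bar o3, bar o1, bar o2) then 1 else 0))"

definition copy_int :: "nat \<Rightarrow> nat \<Rightarrow> nat \<Rightarrow> nat \<Rightarrow> real" where
  "copy_int x u a i = (if x = i \<and> u = a then 1 else 0)"

end

theory Submission
  imports Defs
begin

text \<open>Under the copy interventions the induced correlation is the process itself, so the BFW process
  realizes the GYNI correlation. BFW is a classical process because, after summing over the outcomes,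
  the induced expression is a multilinear polynomial in the outcome marginals of the interventions which
  is identically 1.

  If the GYNI correlation were deterministically consistent, some process function \<open>\<omega>\<close> would carry
  positive weight, and picking for each setting and input an (outcome, output) pair in the support of
  each intervention would give deterministic strategies winning GYNI with certainty under \<open>\<omega>\<close>. A
  process function has a unique fixed point for all local output maps; letting the parties compute their
  settings from their inputs, every local rule for choosing settings then has exactly one consistent
  setting. Hence no party's input depends on its own setting, and three well-chosen rules contradict
  uniqueness whichever of the two winning answers is given on each setting.\<close>

lemma sum_Times3: "(\<Sum>x\<in>A \<times> B \<times> C. f x) = (\<Sum>a\<in>A. \<Sum>b\<in>B. \<Sum>c\<in>C. f (a, b, c))"
  by (simp add: sum.cartesian_product)

lemma sum_Times3_mult:
  fixes f g h :: "_ \<Rightarrow> 'a::comm_semiring_1"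
  shows "(\<Sum>x\<in>A \<times> B \<times> C. f (fst x) * g (fst (snd x)) * h (snd (snd x))) = sum f A * sum g B * sum h C"
proof -
  have "sum f A * sum g B * sum h C = (\<Sum>a\<in>A. f a * (sum g B * sum h C))"
    by (simp add: sum_distrib_right mult.assoc)
  also have "\<dots> = (\<Sum>a\<in>A. \<Sum>b\<in>B. \<Sum>c\<in>C. f a * (g b * h c))"
    by (simp add: sum_distrib_left sum_distrib_right sum.swap[of _ C B])
  finally show ?thesis
    by (simp add: sum_Times3 mult.assoc)
qed

lemma sum_binset: "sum f binset = f 0 + f 1"
  by (simp add: binset_def)

lemma bar_simps [simp]: "bar 0 = 1" "bar 1 = 0" "bar (Suc 0) = 0"
  by (simp_all add: bar_def)

lemma of_bool_in_binset [simp]: "of_bool c \<in> binset"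
  by (simp add: binset_def)

lemma bar_of_bool [simp]: "bar (of_bool c) = of_bool (\<not> c)"
  by (cases c) simp_all

lemma binset_of_bool_eq_iff: "x \<in> binset \<Longrightarrow> x = of_bool c \<longleftrightarrow> (x = 1) = c"
  by (cases c) (auto simp: binset_def)

lemma p_gynin_gynin_corr: "p_gynin gynin_corr = 1"
  by (simp add: p_gynin_def bitvec_def sum_Times3 binset_def gynin_corr_def)

lemma sum_eq_1_imp_pos:
  fixes f :: "'a \<Rightarrow> real"
  assumes "sum f S = 1"
  shows "\<exists>s\<in>S. 0 < f s"
proof (rule ccontr)
  assume "\<not> (\<exists>s\<in>S. 0 < f s)"
  then have "sum f S \<le> 0"
    by (intro sum_nonpos) (simp add: not_less)
  with assms show False by simp
qed

lemma local_intervention_sum: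
  assumes "local_intervention q A X I Os" "a \<in> A" "i \<in> I"
  shows "(\<Sum>(x, u)\<in>X \<times> Os. q x u a i) = 1"
  using assms unfolding local_intervention_def cond_dist_def by (force simp: split_def)

lemma local_intervention_support:
  assumes "local_intervention q A X I Os"
  obtains x u where "\<And>a i. a \<in> A \<Longrightarrow> i \<in> I \<Longrightarrow> x a i \<in> X \<and> u a i \<in> Os \<and> 0 < q (x a i) (u a i) a i"
proof -
  have "\<exists>z\<in>X \<times> Os. 0 < q (fst z) (snd z) a i" if "a \<in> A" "i \<in> I" for a i
    using sum_eq_1_imp_pos[of "\<lambda>z. q (fst z) (snd z) a i" "X \<times> Os"] local_intervention_sum[OF assms that]
    by (simp add: split_def)
  then have "\<exists>z. z \<in> X \<times> Os \<and> 0 < q (fst z) (snd z) a i" if "a \<in> A" "i \<in> I" for a i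
    using that by blast
  then obtain z where "\<And>a i. a \<in> A \<Longrightarrow> i \<in> I \<Longrightarrow> z a i \<in> X \<times> Os \<and> 0 < q (fst (z a i)) (snd (z a i)) a i"
    by metis
  then show ?thesis
    by (intro that[of "\<lambda>a i. fst (z a i)" "\<lambda>a i. snd (z a i)"]) (auto simp: mem_Times_iff)
qed

lemma local_intervention_nonneg:
  "local_intervention q A X I Os \<Longrightarrow> a \<in> A \<Longrightarrow> i \<in> I \<Longrightarrow> x \<in> X \<Longrightarrow> u \<in> Os \<Longrightarrow> 0 \<le> q x u a i"
  unfolding local_intervention_def cond_dist_def by fastforce

lemma induced_apply:
  "induced q1 q2 q3 p I1 I2 I3 O1 O2 O3 (x1, x2, x3) (a1, a2, a3) =
    (\<Sum>i\<in>I1 \<times> I2 \<times> I3. \<Sum>u\<in>O1 \<times> O2 \<times> O3.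
      q1 x1 (fst u) a1 (fst i) * q2 x2 (fst (snd u)) a2 (fst (snd i)) * q3 x3 (snd (snd u)) a3 (snd (snd i)) * p i u)"
  by (simp add: induced_def split_def)

lemma sum_induced:
  "(\<Sum>x\<in>X1 \<times> X2 \<times> X3. induced q1 q2 q3 p I1 I2 I3 O1 O2 O3 x (a1, a2, a3)) =
    (\<Sum>i\<in>I1 \<times> I2 \<times> I3. \<Sum>u\<in>O1 \<times> O2 \<times> O3.
      (\<Sum>x\<in>X1. q1 x (fst u) a1 (fst i)) * (\<Sum>x\<in>X2. q2 x (fst (snd u)) a2 (fst (snd i))) *
      (\<Sum>x\<in>X3. q3 x (snd (snd u)) a3 (snd (snd i))) * p i u)"
  (is "_ = ?rhs")
proof -
  have "(\<Sum>x\<in>X1 \<times> X2 \<times> X3. induced q1 q2 q3 p I1 I2 I3 O1 O2 O3 x (a1, a2, a3)) =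
    (\<Sum>i\<in>I1 \<times> I2 \<times> I3. \<Sum>u\<in>O1 \<times> O2 \<times> O3. \<Sum>x\<in>X1 \<times> X2 \<times> X3.
      q1 (fst x) (fst u) a1 (fst i) * q2 (fst (snd x)) (fst (snd u)) a2 (fst (snd i)) *
      q3 (snd (snd x)) (snd (snd u)) a3 (snd (snd i)) * p i u)"
    unfolding induced_def split_def by (subst sum.swap, subst sum.swap) simp
  also have "\<dots> = ?rhs"
    by (intro sum.cong refl) (subst sum_distrib_right[symmetric], subst sum_Times3_mult, rule refl)
  finally show ?thesis .
qed

lemma induced_term_nonneg:
  assumes "local_intervention q1 A1 X1 I1 O1" "local_intervention q2 A2 X2 I2 O2"
    "local_intervention q3 A3 X3 I3 O3" "cond_dist p (I1 \<times> I2 \<times> I3) (O1 \<times> O2 \<times> O3)"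
    and "(a1, a2, a3) \<in> A1 \<times> A2 \<times> A3" "(x1, x2, x3) \<in> X1 \<times> X2 \<times> X3"
    and "i \<in> I1 \<times> I2 \<times> I3" "u \<in> O1 \<times> O2 \<times> O3"
  shows "0 \<le> q1 x1 (fst u) a1 (fst i) * q2 x2 (fst (snd u)) a2 (fst (snd i)) *
    q3 x3 (snd (snd u)) a3 (snd (snd i)) * p i u"
proof -
  have "0 \<le> q1 x1 (fst u) a1 (fst i)"
    using assms(5-8) by (auto intro: local_intervention_nonneg[OF assms(1)])
  moreover have "0 \<le> q2 x2 (fst (snd u)) a2 (fst (snd i))"
    using assms(5-8) by (auto intro: local_intervention_nonneg[OF assms(2)])
  moreover have "0 \<le> q3 x3 (snd (snd u)) a3 (snd (snd i))"
    using assms(5-8) by (auto intro: local_intervention_nonneg[OF assms(3)])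
  moreover have "0 \<le> p i u"
    using assms(4,7,8) unfolding cond_dist_def by blast
  ultimately show ?thesis
    by (intro mult_nonneg_nonneg)
qed

lemma induced_nonneg:
  assumes "local_intervention q1 A1 X1 I1 O1" "local_intervention q2 A2 X2 I2 O2"
    "local_intervention q3 A3 X3 I3 O3" "cond_dist p (I1 \<times> I2 \<times> I3) (O1 \<times> O2 \<times> O3)"
    and "(a1, a2, a3) \<in> A1 \<times> A2 \<times> A3" "(x1, x2, x3) \<in> X1 \<times> X2 \<times> X3"
  shows "0 \<le> induced q1 q2 q3 p I1 I2 I3 O1 O2 O3 (x1, x2, x3) (a1, a2, a3)"
  unfolding induced_apply by (intro sum_nonneg) (rule induced_term_nonneg[OF assms])

lemma induced_pos:
  assumes "local_intervention q1 A1 X1 I1 O1" "local_intervention q2 A2 X2 I2 O2"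
    "local_intervention q3 A3 X3 I3 O3" "cond_dist p (I1 \<times> I2 \<times> I3) (O1 \<times> O2 \<times> O3)"
    and "(a1, a2, a3) \<in> A1 \<times> A2 \<times> A3" "(x1, x2, x3) \<in> X1 \<times> X2 \<times> X3"
    and "finite I1" "finite I2" "finite I3" "finite O1" "finite O2" "finite O3"
    and i: "i \<in> I1 \<times> I2 \<times> I3" and u: "u \<in> O1 \<times> O2 \<times> O3"
    and "0 < q1 x1 (fst u) a1 (fst i)" "0 < q2 x2 (fst (snd u)) a2 (fst (snd i))"
      "0 < q3 x3 (snd (snd u)) a3 (snd (snd i))" "0 < p i u"
  shows "0 < induced q1 q2 q3 p I1 I2 I3 O1 O2 O3 (x1, x2, x3) (a1, a2, a3)"
  unfolding induced_apply
proof (rule sum_pos2[OF _ i])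
  show "0 < (\<Sum>u\<in>O1 \<times> O2 \<times> O3. q1 x1 (fst u) a1 (fst i) * q2 x2 (fst (snd u)) a2 (fst (snd i)) *
      q3 x3 (snd (snd u)) a3 (snd (snd i)) * p i u)"
    using assms(7-12,15-18) induced_term_nonneg[OF assms(1-6) i] by (intro sum_pos2[OF _ u]) simp_all
qed (use assms in \<open>auto intro: sum_nonneg induced_term_nonneg\<close>)

lemma local_intervention_copy_int: "local_intervention copy_int binset binset binset binset"
  by (auto simp: local_intervention_def cond_dist_def binset_def copy_int_def)

lemma induced_copy_int:
  assumes "finite I1" "finite I2" "finite I3" "finite O1" "finite O2" "finite O3"
    and "(x1, x2, x3) \<in> I1 \<times> I2 \<times> I3" "(a1, a2, a3) \<in> O1 \<times> O2 \<times> O3"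
  shows "induced copy_int copy_int copy_int p I1 I2 I3 O1 O2 O3 (x1, x2, x3) (a1, a2, a3) = p (x1, x2, x3) (a1, a2, a3)"
proof -
  have "induced copy_int copy_int copy_int p I1 I2 I3 O1 O2 O3 (x1, x2, x3) (a1, a2, a3) =
     (\<Sum>i1\<in>I1. \<Sum>i2\<in>I2. \<Sum>i3\<in>I3. \<Sum>o1\<in>O1. \<Sum>o2\<in>O2. \<Sum>o3\<in>O3.
        if o3 = a3 then if o2 = a2 then if o1 = a1 then if i3 = x3 then if i2 = x2 then if i1 = x1
        then p (i1, i2, i3) (o1, o2, o3) else 0 else 0 else 0 else 0 else 0 else 0)"
    unfolding induced_def sum_Times3 prod.case by (intro sum.cong refl) (auto simp: copy_int_def)
  also have "\<dots> = p (x1, x2, x3) (a1, a2, a3)"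
    using assms by (simp add: sum.delta sum.delta')
  finally show ?thesis .
qed

lemma BFW_normalized:
  fixes m1 m2 m3 :: "nat \<Rightarrow> nat \<Rightarrow> real"
  assumes "\<And>i. i \<in> binset \<Longrightarrow> (\<Sum>u\<in>binset. m1 u i) = 1"
    "\<And>i. i \<in> binset \<Longrightarrow> (\<Sum>u\<in>binset. m2 u i) = 1"
    "\<And>i. i \<in> binset \<Longrightarrow> (\<Sum>u\<in>binset. m3 u i) = 1"
  shows "(\<Sum>i\<in>bitvec. \<Sum>u\<in>bitvec.
    m1 (fst u) (fst i) * m2 (fst (snd u)) (fst (snd i)) * m3 (snd (snd u)) (snd (snd i)) * BFW i u) = 1"
proof -
  have "m1 1 i = 1 - m1 0 i" "m2 1 i = 1 - m2 0 i" "m3 1 i = 1 - m3 0 i" if "i \<in> binset" for i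
    using assms[OF that] by (simp_all add: sum_binset)
  then show ?thesis
    by (simp add: bitvec_def sum_Times3 sum_binset binset_def BFW_def) (simp add: field_simps)
qed

lemma classical_process_BFW: "classical_process BFW binset binset binset binset binset binset"
  unfolding classical_process_def
proof (intro conjI allI impI)
  show BFW: "cond_dist BFW (binset \<times> binset \<times> binset) (binset \<times> binset \<times> binset)"
    by (auto simp: cond_dist_def sum_Times3 binset_def BFW_def)
  fix A1 A2 A3 X1 X2 X3 :: "nat set" and q1 q2 q3
  assume "finite A1 \<and> finite A2 \<and> finite A3 \<and> finite X1 \<and> finite X2 \<and> finite X3 \<and>
    local_intervention q1 A1 X1 binset binset \<and> local_intervention q2 A2 X2 binset binset \<and>
    local_intervention q3 A3 X3 binset binset"
  then have q: "local_intervention q1 A1 X1 binset binset" "local_intervention q2 A2 X2 binset binset"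
    "local_intervention q3 A3 X3 binset binset"
    by simp_all
  have marginal: "(\<Sum>u\<in>binset. \<Sum>x\<in>X. q x u a i) = 1"
    if "local_intervention q A X binset binset" "a \<in> A" "i \<in> binset" for q A X a i
    using local_intervention_sum[OF that] by (simp add: sum.cartesian_product[symmetric] sum.swap[of _ binset])
  show "cond_dist (induced q1 q2 q3 BFW binset binset binset binset binset binset) (X1 \<times> X2 \<times> X3) (A1 \<times> A2 \<times> A3)"
    unfolding cond_dist_def
  proof (intro ballI conjI)
    fix a x
    assume "a \<in> A1 \<times> A2 \<times> A3" "x \<in> X1 \<times> X2 \<times> X3"
    then show "0 \<le> induced q1 q2 q3 BFW binset binset binset binset binset binset x a"
      by (cases a, cases x) (auto intro: induced_nonneg[OF q BFW])
  next
    fix a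
    assume "a \<in> A1 \<times> A2 \<times> A3"
    then show "(\<Sum>x\<in>X1 \<times> X2 \<times> X3. induced q1 q2 q3 BFW binset binset binset binset binset binset x a) = 1"
      by (cases a) (auto simp: sum_induced bitvec_def[symmetric] intro!: BFW_normalized marginal[OF q(1)]
          marginal[OF q(2)] marginal[OF q(3)])
  qed
qed

lemma realizes_gynin_corr_BFW:
  "realizes gynin_corr BFW binset binset binset binset binset binset copy_int copy_int copy_int"
  unfolding realizes_def
proof (intro conjI ballI)
  fix x a
  assume "x \<in> bitvec" "a \<in> bitvec"
  then show "gynin_corr x a = induced copy_int copy_int copy_int BFW binset binset binset binset binset binset x a"
    by (auto simp: bitvec_def induced_copy_int binset_def gynin_corr_def BFW_def)
qed (fact classical_process_BFW local_intervention_copy_int | simp add: binset_def)+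

lemma card_Collect_eq_1_iff: "card {x. P x} = 1 \<longleftrightarrow> (\<exists>!x. P x)"
proof -
  have "(\<exists>!x. P x) \<longleftrightarrow> (\<exists>x. {x. P x} = {x})"
    by (auto simp: Ex1_def set_eq_iff)
  then show ?thesis
    by (simp add: card_1_singleton_iff)
qed

lemma local_intervention_output_map:
  assumes "\<And>i. i \<in> I \<Longrightarrow> g i \<in> Os" "finite Os"
  shows "local_intervention (\<lambda>x u a i. if u = g i then 1 else 0) {0} {0} I Os"
proof -
  have "(\<Sum>z\<in>{0::nat} \<times> Os. if snd z = g i then 1 else (0::real)) = 1" if "i \<in> I" for i
    using assms that by (simp add: sum.cartesian_product' sum.delta')
  then show ?thesis
    unfolding local_intervention_def cond_dist_def by (simp add: split_def)
qed

lemma process_function_unique_fixpoint: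
  assumes pf: "process_function \<omega> I1 I2 I3 O1 O2 O3"
    and fin: "finite I1" "finite I2" "finite I3" "finite O1" "finite O2" "finite O3"
    and g: "\<And>i. i \<in> I1 \<Longrightarrow> g1 i \<in> O1" "\<And>i. i \<in> I2 \<Longrightarrow> g2 i \<in> O2" "\<And>i. i \<in> I3 \<Longrightarrow> g3 i \<in> O3"
  shows "\<exists>!u. u \<in> O1 \<times> O2 \<times> O3 \<and> u = map_prod g1 (map_prod g2 g3) (\<omega> u)"
proof -
  let ?g = "map_prod g1 (map_prod g2 g3)" and ?I = "I1 \<times> I2 \<times> I3" and ?O = "O1 \<times> O2 \<times> O3"
  \<comment> \<open>For deterministic interventions with output maps \<open>g\<close>, the induced probability of the trivial
    outcome counts the fixed points of \<open>u \<mapsto> g (\<omega> u)\<close>.\<close>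
  define q where "q g x u a i = (if u = g i then 1 else (0::real))" for g :: "nat \<Rightarrow> nat" and x u a i :: nat
  have \<omega>: "\<omega> u \<in> ?I" if "u \<in> ?O" for u
    using pf that unfolding process_function_def by (cases u) auto
  have summand: "q g1 0 (fst u) 0 (fst i) * q g2 0 (fst (snd u)) 0 (fst (snd i)) * q g3 0 (snd (snd u)) 0 (snd (snd i)) *
      delta_proc \<omega> i u = (if \<omega> u = i then if ?g i = u then 1 else 0 else 0)" for i u
    by (cases i; cases u) (auto simp: q_def delta_proc_def)
  have "local_intervention (q g) {0} {0} I Os" if "\<And>i. i \<in> I \<Longrightarrow> g i \<in> Os" "finite Os" for g I Os
    unfolding q_def using that by (rule local_intervention_output_map)
  then have "local_intervention (q g1) {0} {0} I1 O1" "local_intervention (q g2) {0} {0} I2 O2"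
    "local_intervention (q g3) {0} {0} I3 O3"
    using g fin by simp_all
  moreover have "classical_process (delta_proc \<omega>) I1 I2 I3 O1 O2 O3"
    using pf by (simp add: process_function_def)
  ultimately have "cond_dist (induced (q g1) (q g2) (q g3) (delta_proc \<omega>) I1 I2 I3 O1 O2 O3) ({0} \<times> {0} \<times> {0}) ({0} \<times> {0} \<times> {0})"
    unfolding classical_process_def by (simp del: insert_Times_insert)
  then have "1 = induced (q g1) (q g2) (q g3) (delta_proc \<omega>) I1 I2 I3 O1 O2 O3 (0, 0, 0) (0, 0, 0)"
    by (simp add: cond_dist_def)
  also have "\<dots> = (\<Sum>i\<in>?I. \<Sum>u\<in>?O. if \<omega> u = i then if ?g i = u then 1 else 0 else 0)"
    unfolding induced_apply summand ..
  also have "\<dots> = (\<Sum>u\<in>?O. if ?g (\<omega> u) = u then 1 else 0)"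
    using fin \<omega> by (subst sum.swap) (simp add: sum.delta')
  also have "\<dots> = real (card {u \<in> ?O. ?g (\<omega> u) = u})"
    using fin by (simp add: sum.inter_filter[symmetric])
  finally have "card {u. u \<in> ?O \<and> ?g (\<omega> u) = u} = 1"
    by simp
  then show ?thesis
    by (simp only: card_Collect_eq_1_iff eq_commute[of _ "?g _"])
qed

definition has_unique_fixpoint :: "('a \<Rightarrow> 'a) \<Rightarrow> bool" where
  "has_unique_fixpoint f \<longleftrightarrow> (\<exists>!x. f x = x)"

lemma has_unique_fixpoint_enum:
  fixes f :: "'a::enum \<Rightarrow> 'a"
  shows "has_unique_fixpoint f \<longleftrightarrow> length (filter (\<lambda>x. f x = x) enum_class.enum) = 1"
proof -
  have "{x. f x = x} = set (filter (\<lambda>x. f x = x) enum_class.enum)"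
    by (auto simp: enum_UNIV)
  then have "card {x. f x = x} = length (filter (\<lambda>x. f x = x) enum_class.enum)"
    using distinct_card[OF distinct_filter[OF enum_distinct]] by simp
  then show ?thesis
    by (simp add: has_unique_fixpoint_def flip: card_Collect_eq_1_iff)
qed

lemma fixpoints_no_self_signalling:
  fixes t :: "bool \<Rightarrow> 'a"
  assumes "\<And>\<phi>. \<exists>b. \<phi> (t b) = b"
  shows "t True = t False"
proof -
  obtain b where "(t b = t False) = b"
    using assms[of "\<lambda>i. i = t False"] by blast
  then show ?thesis
    by (cases b) simp_all
qed

lemma local_fixpoints_independent_of_own_setting:
  fixes s1 :: "bool \<times> bool \<times> bool \<Rightarrow> 'i1" and s2 :: "bool \<times> bool \<times> bool \<Rightarrow> 'i2"
    and s3 :: "bool \<times> bool \<times> bool \<Rightarrow> 'i3"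
  assumes fixpoint_ex: "\<And>\<phi>1 \<phi>2 \<phi>3. \<exists>b. (\<phi>1 (s1 b), \<phi>2 (s2 b), \<phi>3 (s3 b)) = b"
  shows "s1 (c, b2, b3) = s1 (b1, b2, b3)" "s2 (b1, c, b3) = s2 (b1, b2, b3)" "s3 (b1, b2, c) = s3 (b1, b2, b3)"
proof -
  have "s1 (True, b2, b3) = s1 (False, b2, b3)"
    by (rule fixpoints_no_self_signalling) (use fixpoint_ex[of _ "\<lambda>_. b2" "\<lambda>_. b3"] in force)
  moreover have "s2 (b1, True, b3) = s2 (b1, False, b3)"
    by (rule fixpoints_no_self_signalling) (use fixpoint_ex[of "\<lambda>_. b1" _ "\<lambda>_. b3"] in force)
  moreover have "s3 (b1, b2, True) = s3 (b1, b2, False)"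
    by (rule fixpoints_no_self_signalling) (use fixpoint_ex[of "\<lambda>_. b1" "\<lambda>_. b2"] in force)
  ultimately show "s1 (c, b2, b3) = s1 (b1, b2, b3)" "s2 (b1, c, b3) = s2 (b1, b2, b3)" "s3 (b1, b2, c) = s3 (b1, b2, b3)"
    by (cases c; cases b1; cases b2; cases b3; simp)+
qed

text \<open>Here \<open>e b1 b2 b3\<close> tells whether on settings \<open>(b1, b2, b3)\<close> the complemented answer
  \<open>(\<not> b3, \<not> b1, \<not> b2)\<close> is given instead of \<open>(b3, b1, b2)\<close>. The three maps are the settings chosen by
  the parties from their guesses for a fixed setting, from the negations of these, and from whether the
  guess depends on the own setting.\<close>

lemma gynin_answer_choice_not_fixpoint_unique:
  fixes e :: "bool \<Rightarrow> bool \<Rightarrow> bool \<Rightarrow> bool"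
  assumes "has_unique_fixpoint (\<lambda>(b1, b2, b3). (b3 \<noteq> e True b2 b3, b1 \<noteq> e b1 False b3, b2 \<noteq> e b1 b2 False))"
    and "has_unique_fixpoint (\<lambda>(b1, b2, b3). (b3 = e True b2 b3, b1 = e b1 False b3, b2 = e b1 b2 False))"
    and "has_unique_fixpoint (\<lambda>(b1, b2, b3). (e False b2 b3 = e True b2 b3, False, e b1 b2 False = e b1 b2 True))"
  shows False
  using assms unfolding has_unique_fixpoint_enum
  by (cases "e False False False"; cases "e False False True"; cases "e False True False";
      cases "e False True True"; cases "e True False False"; cases "e True False True";
      cases "e True True False"; cases "e True True True") (simp_all add: enum_prod_def enum_bool_def)

lemma local_fixpoints_no_perfect_gynin:
  fixes s1 :: "bool \<times> bool \<times> bool \<Rightarrow> 'i1" and s2 :: "bool \<times> bool \<times> bool \<Rightarrow> 'i2"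
    and s3 :: "bool \<times> bool \<times> bool \<Rightarrow> 'i3"
  assumes unique: "\<And>\<phi>1 \<phi>2 \<phi>3. has_unique_fixpoint (\<lambda>b. (\<phi>1 (s1 b), \<phi>2 (s2 b), \<phi>3 (s3 b)))"
    and win: "\<And>a1 a2 a3. (h1 a1 (s1 (a1, a2, a3)), h2 a2 (s2 (a1, a2, a3)), h3 a3 (s3 (a1, a2, a3)))
      \<in> {(a3, a1, a2), (\<not> a3, \<not> a1, \<not> a2)}"
  shows False
proof -
  have fixpoint_ex: "\<exists>b. (\<phi>1 (s1 b), \<phi>2 (s2 b), \<phi>3 (s3 b)) = b" for \<phi>1 \<phi>2 \<phi>3
    using unique[of \<phi>1 \<phi>2 \<phi>3] by (auto simp: has_unique_fixpoint_def)
  have s1: "s1 (c, b2, b3) = s1 (b1, b2, b3)" and s2: "s2 (b1, c, b3) = s2 (b1, b2, b3)"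
    and s3: "s3 (b1, b2, c) = s3 (b1, b2, b3)" for c b1 b2 b3
    using local_fixpoints_independent_of_own_setting[of s1 s2 s3, OF fixpoint_ex] by simp_all
  define e where "e a1 a2 a3 \<longleftrightarrow> h1 a1 (s1 (a1, a2, a3)) \<noteq> a3" for a1 a2 a3
  have answers: "h1 x (s1 (x, y, z)) = (z \<noteq> e x y z)" "h2 y (s2 (x, y, z)) = (x \<noteq> e x y z)"
    "h3 z (s3 (x, y, z)) = (y \<noteq> e x y z)" for x y z
    using win[of x y z] by (auto simp: e_def)
  have h1: "h1 c (s1 (b1, b2, b3)) = (b3 \<noteq> e c b2 b3)" for c b1 b2 b3
    using answers(1)[where x = c and y = b2 and z = b3] s1[of c b2 b3 b1] by simp
  have h2: "h2 c (s2 (b1, b2, b3)) = (b1 \<noteq> e b1 c b3)" for c b1 b2 b3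
    using answers(2)[where x = b1 and y = c and z = b3] s2[of b1 c b3 b2] by simp
  have h3: "h3 c (s3 (b1, b2, b3)) = (b2 \<noteq> e b1 b2 c)" for c b1 b2 b3
    using answers(3)[where x = b1 and y = b2 and z = c] s3[of b1 b2 c b3] by simp
  show False
  proof (rule gynin_answer_choice_not_fixpoint_unique[of e])
    show "has_unique_fixpoint (\<lambda>(b1, b2, b3). (b3 \<noteq> e True b2 b3, b1 \<noteq> e b1 False b3, b2 \<noteq> e b1 b2 False))"
      using unique[of "h1 True" "h2 False" "h3 False"] by (rule back_subst[where P = has_unique_fixpoint]) (auto simp: h1 h2 h3)
    show "has_unique_fixpoint (\<lambda>(b1, b2, b3). (b3 = e True b2 b3, b1 = e b1 False b3, b2 = e b1 b2 False))"
      using unique[of "\<lambda>i. \<not> h1 True i" "\<lambda>i. \<not> h2 False i" "\<lambda>i. \<not> h3 False i"]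
      by (rule back_subst[where P = has_unique_fixpoint]) (auto simp: h1 h2 h3)
    show "has_unique_fixpoint
        (\<lambda>(b1, b2, b3). (e False b2 b3 = e True b2 b3, False, e b1 b2 False = e b1 b2 True))"
      using unique[of "\<lambda>i. h1 False i = h1 True i" "\<lambda>_. False" "\<lambda>i. h3 False i = h3 True i"]
      by (rule back_subst[where P = has_unique_fixpoint]) (auto simp: h1 h3)
  qed
qed

lemma process_function_local_fixpoints:
  fixes g1 g2 g3 :: "bool \<Rightarrow> nat \<Rightarrow> nat"
  assumes pf: "process_function \<omega> I1 I2 I3 O1 O2 O3"
    and fin: "finite I1" "finite I2" "finite I3" "finite O1" "finite O2" "finite O3"
    and g: "\<And>a i. i \<in> I1 \<Longrightarrow> g1 a i \<in> O1" "\<And>a i. i \<in> I2 \<Longrightarrow> g2 a i \<in> O2"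
      "\<And>a i. i \<in> I3 \<Longrightarrow> g3 a i \<in> O3"
  obtains s :: "bool \<times> bool \<times> bool \<Rightarrow> vec3" where
    "\<And>a1 a2 a3. \<exists>u\<in>O1 \<times> O2 \<times> O3. u = map_prod (g1 a1) (map_prod (g2 a2) (g3 a3)) (\<omega> u) \<and> s (a1, a2, a3) = \<omega> u"
    "\<And>\<phi>1 \<phi>2 \<phi>3. has_unique_fixpoint (\<lambda>b. (\<phi>1 (fst (s b)), \<phi>2 (fst (snd (s b))), \<phi>3 (snd (snd (s b)))))"
proof -
  let ?O = "O1 \<times> O2 \<times> O3"
  let ?G = "\<lambda>(a1, a2, a3). map_prod (g1 a1) (map_prod (g2 a2) (g3 a3))"
  have unique: "\<exists>!u. u \<in> ?O \<and> u = ?G a (\<omega> u)" for a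
    by (cases a) (simp, rule process_function_unique_fixpoint[OF pf fin], use g in auto)
  define fp where "fp a = (THE u. u \<in> ?O \<and> u = ?G a (\<omega> u))" for a
  have fp: "fp a \<in> ?O \<and> fp a = ?G a (\<omega> (fp a))" for a
    unfolding fp_def by (rule theI'[OF unique])
  have fp_eq: "fp a = u" if "u \<in> ?O" "u = ?G a (\<omega> u)" for a u
    unfolding fp_def by (rule the1_equality[OF unique], rule conjI[OF that])
  define s where "s a = \<omega> (fp a)" for a
  show ?thesis
  proof (rule that)
    fix a1 a2 a3
    show "\<exists>u\<in>?O. u = map_prod (g1 a1) (map_prod (g2 a2) (g3 a3)) (\<omega> u) \<and> s (a1, a2, a3) = \<omega> u"
      using fp[of "(a1, a2, a3)"] unfolding s_def by (intro bexI[of _ "fp (a1, a2, a3)"]) simp_all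
  next
    fix \<phi>1 \<phi>2 \<phi>3 :: "nat \<Rightarrow> bool"
    let ?H = "map_prod (\<lambda>i. g1 (\<phi>1 i) i) (map_prod (\<lambda>i. g2 (\<phi>2 i) i) (\<lambda>i. g3 (\<phi>3 i) i))"
    have "\<exists>!u. u \<in> ?O \<and> u = ?H (\<omega> u)"
      by (rule process_function_unique_fixpoint[OF pf fin]) (use g in auto)
    then obtain u where u: "u \<in> ?O" "u = ?H (\<omega> u)" and u_unique: "\<And>v. v \<in> ?O \<Longrightarrow> v = ?H (\<omega> v) \<Longrightarrow> v = u"
      by blast
    define b0 where "b0 = (\<phi>1 (fst (\<omega> u)), \<phi>2 (fst (snd (\<omega> u))), \<phi>3 (snd (snd (\<omega> u))))"
    have "fp b0 = u"
      using u by (intro fp_eq) (simp_all add: b0_def map_prod_def split_def)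
    show "has_unique_fixpoint (\<lambda>b. (\<phi>1 (fst (s b)), \<phi>2 (fst (snd (s b))), \<phi>3 (snd (snd (s b)))))"
      unfolding has_unique_fixpoint_def
    proof (rule ex1I[of _ b0])
      show "(\<phi>1 (fst (s b0)), \<phi>2 (fst (snd (s b0))), \<phi>3 (snd (snd (s b0)))) = b0"
        using \<open>fp b0 = u\<close> by (simp add: s_def b0_def)
    next
      fix b
      assume b: "(\<phi>1 (fst (s b)), \<phi>2 (fst (snd (s b))), \<phi>3 (snd (snd (s b)))) = b"
      obtain c1 c2 c3 where c: "b = (c1, c2, c3)"
        by (cases b)
      have "fp b = map_prod (g1 c1) (map_prod (g2 c2) (g3 c3)) (\<omega> (fp b))"
        using fp[of b] c by simp
      also have "\<dots> = ?H (\<omega> (fp b))"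
        using b c by (simp add: s_def map_prod_def case_prod_unfold)
      finally have "fp b = ?H (\<omega> (fp b))" .
      then have "fp b = u"
        by (rule u_unique[OF conjunct1[OF fp[of b]]])
      with b show "b = b0"
        by (auto simp: s_def b0_def)
    qed
  qed
qed

lemma process_function_no_perfect_gynin:
  fixes g1 g2 g3 :: "bool \<Rightarrow> nat \<Rightarrow> nat" and h1 h2 h3 :: "bool \<Rightarrow> nat \<Rightarrow> bool"
  assumes pf: "process_function \<omega> I1 I2 I3 O1 O2 O3"
    and fin: "finite I1" "finite I2" "finite I3" "finite O1" "finite O2" "finite O3"
    and g: "\<And>a i. i \<in> I1 \<Longrightarrow> g1 a i \<in> O1" "\<And>a i. i \<in> I2 \<Longrightarrow> g2 a i \<in> O2"
      "\<And>a i. i \<in> I3 \<Longrightarrow> g3 a i \<in> O3"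
    and win: "\<And>a1 a2 a3 u. u \<in> O1 \<times> O2 \<times> O3 \<Longrightarrow> u = map_prod (g1 a1) (map_prod (g2 a2) (g3 a3)) (\<omega> u) \<Longrightarrow>
      (h1 a1 (fst (\<omega> u)), h2 a2 (fst (snd (\<omega> u))), h3 a3 (snd (snd (\<omega> u))))
        \<in> {(a3, a1, a2), (\<not> a3, \<not> a1, \<not> a2)}"
  shows False
proof -
  obtain s where s: "\<And>a1 a2 a3. \<exists>u\<in>O1 \<times> O2 \<times> O3.
      u = map_prod (g1 a1) (map_prod (g2 a2) (g3 a3)) (\<omega> u) \<and> s (a1, a2, a3) = \<omega> u"
    and unique: "\<And>\<phi>1 \<phi>2 \<phi>3. has_unique_fixpoint (\<lambda>b. (\<phi>1 (fst (s b)), \<phi>2 (fst (snd (s b))), \<phi>3 (snd (snd (s b)))))"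
    using process_function_local_fixpoints[of \<omega> I1 I2 I3 O1 O2 O3 g1 g2 g3, OF pf fin g] by blast
  show False
  proof (rule local_fixpoints_no_perfect_gynin[of "\<lambda>b. fst (s b)" "\<lambda>b. fst (snd (s b))" "\<lambda>b. snd (snd (s b))"])
    show "has_unique_fixpoint (\<lambda>b. (\<phi>1 (fst (s b)), \<phi>2 (fst (snd (s b))), \<phi>3 (snd (snd (s b)))))" for \<phi>1 \<phi>2 \<phi>3
      by (rule unique)
    fix a1 a2 a3
    obtain u where u: "u \<in> O1 \<times> O2 \<times> O3" "u = map_prod (g1 a1) (map_prod (g2 a2) (g3 a3)) (\<omega> u)"
      and su: "s (a1, a2, a3) = \<omega> u"
      using s[of a1 a2 a3] by (elim bexE conjE)
    show "(h1 a1 (fst (s (a1, a2, a3))), h2 a2 (fst (snd (s (a1, a2, a3)))), h3 a3 (snd (snd (s (a1, a2, a3)))))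
        \<in> {(a3, a1, a2), (\<not> a3, \<not> a1, \<not> a2)}"
      using win[OF u] unfolding su .
  qed
qed

lemma gynin_corr_pos_imp:
  "0 < gynin_corr x (a1, a2, a3) \<Longrightarrow> x = (a3, a1, a2) \<or> x = (bar a3, bar a1, bar a2)"
  by (auto simp: gynin_corr_def split: if_splits)

lemma realizes_pos:
  assumes "realizes P p I1 I2 I3 O1 O2 O3 q1 q2 q3"
    and "(a1, a2, a3) \<in> bitvec" "(x1, x2, x3) \<in> bitvec"
    and "i \<in> I1 \<times> I2 \<times> I3" "u \<in> O1 \<times> O2 \<times> O3"
    and "0 < q1 x1 (fst u) a1 (fst i)" "0 < q2 x2 (fst (snd u)) a2 (fst (snd i))"
      "0 < q3 x3 (snd (snd u)) a3 (snd (snd i))" "0 < p i u"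
  shows "0 < P (x1, x2, x3) (a1, a2, a3)"
proof -
  have "0 < induced q1 q2 q3 p I1 I2 I3 O1 O2 O3 (x1, x2, x3) (a1, a2, a3)"
    using assms by (intro induced_pos) (auto simp: realizes_def classical_process_def bitvec_def)
  with assms(1-3) show ?thesis
    by (simp add: realizes_def)
qed

lemma process_function_mixture_support:
  assumes "finite J" "\<forall>j\<in>J. 0 \<le> lam j \<and> process_function (\<omega> j) I1 I2 I3 O1 O2 O3" "sum lam J = 1"
    and mix: "\<forall>i\<in>I1 \<times> I2 \<times> I3. \<forall>u\<in>O1 \<times> O2 \<times> O3. p i u = (\<Sum>j\<in>J. lam j * delta_proc (\<omega> j) i u)"
  obtains j where "process_function (\<omega> j) I1 I2 I3 O1 O2 O3" "\<And>u. u \<in> O1 \<times> O2 \<times> O3 \<Longrightarrow> 0 < p (\<omega> j u) u"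
proof -
  obtain j where j: "j \<in> J" "0 < lam j"
    using sum_eq_1_imp_pos[OF assms(3)] by blast
  have pf: "process_function (\<omega> j) I1 I2 I3 O1 O2 O3"
    using assms(2) j(1) by blast
  have "0 < p (\<omega> j u) u" if u: "u \<in> O1 \<times> O2 \<times> O3" for u
  proof -
    have \<omega>: "\<omega> j u \<in> I1 \<times> I2 \<times> I3"
      using pf u unfolding process_function_def by (cases u) auto
    have "lam j * delta_proc (\<omega> j) (\<omega> j u) u \<le> (\<Sum>j'\<in>J. lam j' * delta_proc (\<omega> j') (\<omega> j u) u)"
      using assms(1,2) j(1) by (intro member_le_sum) (auto simp: delta_proc_def)
    also have "\<dots> = p (\<omega> j u) u"
      using mix[rule_format, OF \<omega> u] by simp
    finally show ?thesis
      using j(2) by (simp add: delta_proc_def)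
  qed
  with pf show ?thesis
    by (rule that)
qed

lemma realizes_gynin_corr_no_supported_process_function:
  assumes R: "realizes gynin_corr p I1 I2 I3 O1 O2 O3 q1 q2 q3"
    and pf: "process_function \<omega> I1 I2 I3 O1 O2 O3"
    and supported: "\<And>u. u \<in> O1 \<times> O2 \<times> O3 \<Longrightarrow> 0 < p (\<omega> u) u"
  shows False
proof -
  have fin: "finite I1" "finite I2" "finite I3" "finite O1" "finite O2" "finite O3"
    and li: "local_intervention q1 binset binset I1 O1" "local_intervention q2 binset binset I2 O2"
      "local_intervention q3 binset binset I3 O3"
    using R by (simp_all add: realizes_def)
  have \<omega>: "\<omega> u \<in> I1 \<times> I2 \<times> I3" if "u \<in> O1 \<times> O2 \<times> O3" for u
    using pf that unfolding process_function_def by (cases u) auto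
  obtain x1 o1 where s1: "\<And>a i. a \<in> binset \<Longrightarrow> i \<in> I1 \<Longrightarrow> x1 a i \<in> binset \<and> o1 a i \<in> O1 \<and> 0 < q1 (x1 a i) (o1 a i) a i"
    using local_intervention_support[OF li(1)] by blast
  obtain x2 o2 where s2: "\<And>a i. a \<in> binset \<Longrightarrow> i \<in> I2 \<Longrightarrow> x2 a i \<in> binset \<and> o2 a i \<in> O2 \<and> 0 < q2 (x2 a i) (o2 a i) a i"
    using local_intervention_support[OF li(2)] by blast
  obtain x3 o3 where s3: "\<And>a i. a \<in> binset \<Longrightarrow> i \<in> I3 \<Longrightarrow> x3 a i \<in> binset \<and> o3 a i \<in> O3 \<and> 0 < q3 (x3 a i) (o3 a i) a i"
    using local_intervention_support[OF li(3)] by blast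
  \<comment> \<open>At a fixed point of \<open>\<omega>\<close> the chosen answers give a positive term of the induced sum, so they win.\<close>
  show False
  proof (rule process_function_no_perfect_gynin[OF pf fin,
        of "\<lambda>c. o1 (of_bool c)" "\<lambda>c. o2 (of_bool c)" "\<lambda>c. o3 (of_bool c)"
        "\<lambda>c i. x1 (of_bool c) i = 1" "\<lambda>c i. x2 (of_bool c) i = 1" "\<lambda>c i. x3 (of_bool c) i = 1"])
    fix a1 a2 a3 u
    assume u: "u \<in> O1 \<times> O2 \<times> O3"
      "u = map_prod (o1 (of_bool a1)) (map_prod (o2 (of_bool a2)) (o3 (of_bool a3))) (\<omega> u)"
    obtain i1 i2 i3 where i: "\<omega> u = (i1, i2, i3)"
      by (cases "\<omega> u")
    have "(i1, i2, i3) \<in> I1 \<times> I2 \<times> I3"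
      using \<omega>[OF u(1)] i by simp
    then have x: "x1 (of_bool a1) i1 \<in> binset" "x2 (of_bool a2) i2 \<in> binset" "x3 (of_bool a3) i3 \<in> binset"
      and "0 < q1 (x1 (of_bool a1) i1) (fst u) (of_bool a1) i1" "0 < q2 (x2 (of_bool a2) i2) (fst (snd u)) (of_bool a2) i2"
        "0 < q3 (x3 (of_bool a3) i3) (snd (snd u)) (of_bool a3) i3"
      using s1 s2 s3 u(2) i by auto
    then have "0 < gynin_corr (x1 (of_bool a1) i1, x2 (of_bool a2) i2, x3 (of_bool a3) i3) (of_bool a1, of_bool a2, of_bool a3)"
      using \<open>(i1, i2, i3) \<in> I1 \<times> I2 \<times> I3\<close> u(1) supported[OF u(1)] i
      by (intro realizes_pos[OF R]) (auto simp: bitvec_def)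
    then show "(x1 (of_bool a1) (fst (\<omega> u)) = 1, x2 (of_bool a2) (fst (snd (\<omega> u))) = 1,
        x3 (of_bool a3) (snd (snd (\<omega> u))) = 1) \<in> {(a3, a1, a2), (\<not> a3, \<not> a1, \<not> a2)}"
      using x i by (auto dest!: gynin_corr_pos_imp simp: binset_of_bool_eq_iff)
  qed (simp_all add: s1[OF of_bool_in_binset] s2[OF of_bool_in_binset] s3[OF of_bool_in_binset])
qed

lemma gynin_corr_notin_DC: "gynin_corr \<notin> DC"
  unfolding DC_def
proof clarify
  fix p I1 I2 I3 O1 O2 O3 q1 q2 q3 J lam \<omega>
  assume R: "realizes gynin_corr p I1 I2 I3 O1 O2 O3 q1 q2 q3"
    and mixture: "finite J" "\<forall>j\<in>J. 0 \<le> lam j \<and> process_function (\<omega> j) I1 I2 I3 O1 O2 O3" "sum lam J = 1"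
      "\<forall>i\<in>I1 \<times> I2 \<times> I3. \<forall>u\<in>O1 \<times> O2 \<times> O3. p i u = (\<Sum>j\<in>J. lam j * delta_proc (\<omega> j) i u)"
  from mixture obtain j where "process_function (\<omega> j) I1 I2 I3 O1 O2 O3" "\<And>u. u \<in> O1 \<times> O2 \<times> O3 \<Longrightarrow> 0 < p (\<omega> j u) u"
    by (rule process_function_mixture_support) blast
  with R show False
    by (rule realizes_gynin_corr_no_supported_process_function)
qed

lemma DC_subset_PC: "DC \<subseteq> PC"
  unfolding DC_def PC_def by blast

theorem theorem10:
  shows "p_gynin gynin_corr = 1 \<and>
         realizes gynin_corr BFW binset binset binset binset binset binset copy_int copy_int copy_int \<and>
         gynin_corr \<in> PC \<and> gynin_corr \<notin> DC \<and> DC \<subset> PC"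
proof -
  have "gynin_corr \<in> PC"
    unfolding PC_def using realizes_gynin_corr_BFW by blast
  then show ?thesis
    using p_gynin_gynin_corr realizes_gynin_corr_BFW gynin_corr_notin_DC DC_subset_PC by blast
qed

end
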